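(* For $n\ge1$ and $0\le k\le n-1$, the number of directed paths in $\Gamma$ from $(0,0)$ to $(n,k)$ satisfies $$\pi(n,k,0)=E_{n,k}=\sum_{r=0}^{\lfloor (k-1)/2\rfloor}(-1)^r\binom{k}{2r+1}E_{n-2r-1},$$ where the sum is empty (equal to $0$) when $k=0$.
   Context: Let $\Gamma$ be the directed graph whose nodes are the pairs $(n,k)$ of integers with $n\ge k\ge 0$, and whose edges are, for all $n\ge k\ge 0$: $(n+1,k)\to(n+1,k+1)$ and $(n,n-k)\to(n+1,k+1)$. $\pi(n,k,i)$ denotes the number of directed paths in $\Gamma$ from $(i,0)$ to $(n,k)$. A sequence $x_1,\ldots,x_m$ is down-up if $x_1>x_2<x_3>\cdots$. $E_n$ is the number of down-up permutations of $\{1,\ldots,n\}$ ($E_0=E_1=1$). The Entringer number $E_{n,k}$ ($n\ge k\ge 0$) is the number of down-up permutations of $\{1,\ldots,n+1\}$ whose first entry is $k+1$, with the convention $E_{0,0}=1$; equivalently $E_{0,0}=1$, $E_{n,0}=0$ for $n\ge1$, and $E_{n+1,k+1}=E_{n+1,k}+E_{n,n-k}$ for $n\ge k\ge0$. *)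

theory Defs
  imports Main
begin

definition gamma_node :: "nat \<times> nat \<Rightarrow> bool" where
  "gamma_node v \<longleftrightarrow> snd v \<le> fst v"

definition gamma_edge :: "nat \<times> nat \<Rightarrow> nat \<times> nat \<Rightarrow> bool" where
  "gamma_edge u v \<longleftrightarrow>
     (\<exists>n k. k \<le> n \<and>
        ((u = (n+1, k) \<and> v = (n+1, k+1)) \<or> (u = (n, n-k) \<and> v = (n+1, k+1))))"

definition gamma_path :: "(nat \<times> nat) list \<Rightarrow> bool" where
  "gamma_path ps \<longleftrightarrow> ps \<noteq> [] \<and> (\<forall>v\<in>set ps. gamma_node v) \<and>
     (\<forall>j. Suc j < length ps \<longrightarrow> gamma_edge (ps ! j) (ps ! Suc j))"

definition path_count :: "nat \<Rightarrow> nat \<Rightarrow> nat \<Rightarrow> nat" where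
  "path_count n k i = card {ps. gamma_path ps \<and> hd ps = (i, 0) \<and> last ps = (n, k)}"

definition down_up :: "nat list \<Rightarrow> bool" where
  "down_up xs \<longleftrightarrow> (\<forall>i. Suc i < length xs \<longrightarrow>
      (if even i then xs ! i > xs ! Suc i else xs ! i < xs ! Suc i))"

definition euler_zigzag :: "nat \<Rightarrow> nat" where
  "euler_zigzag n = card {xs. distinct xs \<and> set xs = {1..n} \<and> down_up xs}"

text \<open>Entringer number E_{n,k}: down-up permutations of {1..n+1} with first entry k+1.
  (For n = 0 this gives E_{0,0} = 1, agreeing with the convention.)\<close>
definition entringer :: "nat \<Rightarrow> nat \<Rightarrow> nat" where
  "entringer n k = card {xs. distinct xs \<and> set xs = {1..n+1} \<and> down_up xs \<and> hd xs = k + 1}"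

end

theory Submission
  imports Defs
begin

text \<open>Both sides of the first identity satisfy the Entringer recursion
  \<open>E(n+1,k+1) = E(n+1,k) + E(n,n-k)\<close> with the same boundary values. For paths this is
  the decomposition by the last edge, since the only edges into \<open>(n+1,k+1)\<close> come from
  \<open>(n+1,k)\<close> and \<open>(n,n-k)\<close>. For permutations, deleting the first entry \<open>k+1\<close> and
  reversing the order of the remaining entries identifies \<open>E(n,k)\<close> with the number of
  down-up permutations of \<open>{1..n}\<close> whose first entry exceeds \<open>n-k\<close>; hence
  \<open>E(n+1,k+1) - E(n+1,k)\<close> counts those of \<open>{1..n+1}\<close> with first entry \<open>n-k+1\<close>,
  which is \<open>E(n,n-k)\<close>.

  For the alternating sum, the recursion shows that the second difference in \<open>k\<close> of
  \<open>E(n,k)\<close> is \<open>-E(n-2,k)\<close>; Pascal's rule applied twice shows the same for the sum,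
  and both agree for \<open>k = 0, 1\<close>.\<close>

definition zigzag_perms :: "nat \<Rightarrow> nat list set" where
  "zigzag_perms m = {xs. distinct xs \<and> set xs = {1..m} \<and> down_up xs}"

lemma euler_zigzag_eq_card: "euler_zigzag m = card (zigzag_perms m)"
  by (simp add: euler_zigzag_def zigzag_perms_def)

lemma entringer_eq_card: "entringer n k = card {xs \<in> zigzag_perms (Suc n). hd xs = Suc k}"
  unfolding entringer_def zigzag_perms_def by simp

lemma length_zigzag_perms: "xs \<in> zigzag_perms m \<Longrightarrow> length xs = m"
  unfolding zigzag_perms_def using distinct_card by fastforce

lemma finite_zigzag_perms: "finite (zigzag_perms m)"
proof (rule finite_subset)
  show "zigzag_perms m \<subseteq> {xs. set xs \<subseteq> {1..m} \<and> length xs = m}"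
    using length_zigzag_perms by (auto simp: zigzag_perms_def)
qed (rule finite_lists_length_eq, simp)

lemma down_up_Cons:
  "down_up (a # xs) \<longleftrightarrow> (xs \<noteq> [] \<longrightarrow> hd xs < a) \<and>
     (\<forall>i. Suc i < length xs \<longrightarrow> (if even i then xs ! i < xs ! Suc i else xs ! Suc i < xs ! i))"
proof -
  have split_nat: "(\<forall>i. P i) \<longleftrightarrow> P 0 \<and> (\<forall>j. P (Suc j))" for P :: "nat \<Rightarrow> bool"
    by (metis nat.exhaust)
  show ?thesis
    unfolding down_up_def by (subst (1) split_nat) (auto simp: hd_conv_nth)
qed

lemma down_up_Cons_map_antimono:
  assumes "\<And>x y. x \<in> set zs \<Longrightarrow> y \<in> set zs \<Longrightarrow> x < y \<Longrightarrow> h y < h x"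
  shows "down_up (a # map h zs) \<longleftrightarrow> (zs \<noteq> [] \<longrightarrow> h (hd zs) < a) \<and> down_up zs"
proof -
  have reversed: "h (zs ! i) < h (zs ! j) \<longleftrightarrow> zs ! j < zs ! i"
    if "i < length zs" "j < length zs" for i j
    using assms[of "zs ! i" "zs ! j"] assms[of "zs ! j" "zs ! i"] that
    by (cases "zs ! i" "zs ! j" rule: linorder_cases) auto
  have "(\<forall>i. Suc i < length (map h zs) \<longrightarrow> (if even i then map h zs ! i < map h zs ! Suc i
      else map h zs ! Suc i < map h zs ! i)) \<longleftrightarrow> down_up zs"
    unfolding down_up_def by (simp add: reversed)
  then show ?thesis
    unfolding down_up_Cons by (simp add: hd_map)
qed

lemma Cons_map_in_zigzag_perms_iff:
  assumes bij: "bij_betw h {1..n} ({1..Suc n} - {a})"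
    and antimono: "\<And>x y. x \<in> {1..n} \<Longrightarrow> y \<in> {1..n} \<Longrightarrow> x < y \<Longrightarrow> h y < h x"
    and a: "a \<in> {1..Suc n}" and zs: "set zs \<subseteq> {1..n}"
  shows "a # map h zs \<in> zigzag_perms (Suc n) \<longleftrightarrow>
    zs \<in> zigzag_perms n \<and> (zs \<noteq> [] \<longrightarrow> h (hd zs) < a)"
proof -
  have inj: "inj_on h {1..n}" and image: "h ` {1..n} = {1..Suc n} - {a}"
    using bij by (auto simp: bij_betw_def)
  then have a_notin: "a \<notin> h ` set zs" using zs by blast
  have "distinct (a # map h zs) \<longleftrightarrow> distinct zs"
    using a_notin inj zs by (simp add: distinct_map inj_on_subset)
  moreover have "set (a # map h zs) = {1..Suc n} \<longleftrightarrow> h ` set zs = h ` {1..n}"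
    unfolding image using a a_notin by (simp only: list.set set_map) blast
  moreover have "h ` set zs = h ` {1..n} \<longleftrightarrow> set zs = {1..n}"
    using inj zs by (simp add: inj_on_image_eq_iff)
  moreover have "down_up (a # map h zs) \<longleftrightarrow> (zs \<noteq> [] \<longrightarrow> h (hd zs) < a) \<and> down_up zs"
    by (rule down_up_Cons_map_antimono) (use antimono zs in blast)
  ultimately show ?thesis by (auto simp: zigzag_perms_def)
qed

lemma entringer_eq_card_hd_gt:
  assumes "k \<le> n"
  shows "entringer n k = card {zs \<in> zigzag_perms n. zs \<noteq> [] \<longrightarrow> n < hd zs + k}"
proof -
  define h where "h y = (if y + k \<le> n then Suc (Suc n) - y else Suc n - y)" for y
  define g where "g x = (if x \<le> k then Suc n - x else Suc (Suc n) - x)" for x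
  have bij: "bij_betw h {1..n} ({1..Suc n} - {Suc k})"
    using assms by (intro bij_betw_byWitness[where f' = g]) (auto simp: h_def g_def)
  have antimono: "h y < h x" if "x \<in> {1..n}" "y \<in> {1..n}" "x < y" for x y
    using that by (auto simp: h_def)
  have h_less_iff: "h y < Suc k \<longleftrightarrow> n < y + k" if "y \<in> {1..n}" for y
    using that by (auto simp: h_def)
  have Cons_iff: "Suc k # map h zs \<in> zigzag_perms (Suc n) \<longleftrightarrow>
      zs \<in> zigzag_perms n \<and> (zs \<noteq> [] \<longrightarrow> n < hd zs + k)" if "set zs \<subseteq> {1..n}" for zs
  proof -
    have "h (hd zs) < Suc k \<longleftrightarrow> n < hd zs + k" if "zs \<noteq> []"
      using h_less_iff hd_in_set[OF that] \<open>set zs \<subseteq> {1..n}\<close> by blast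
    then show ?thesis
      using Cons_map_in_zigzag_perms_iff[OF bij antimono _ that] assms by auto
  qed
  let ?A = "{zs \<in> zigzag_perms n. zs \<noteq> [] \<longrightarrow> n < hd zs + k}"
  let ?B = "{xs \<in> zigzag_perms (Suc n). hd xs = Suc k}"
  have "bij_betw (\<lambda>zs. Suc k # map h zs) ?A ?B"
    unfolding bij_betw_def
  proof (intro conjI equalityI subsetI)
    have "inj_on (map h) ?A"
      using bij by (intro inj_on_mapI) (auto simp: bij_betw_def zigzag_perms_def)
    then show "inj_on (\<lambda>zs. Suc k # map h zs) ?A" by (simp add: inj_on_def)
  next
    fix xs assume "xs \<in> (\<lambda>zs. Suc k # map h zs) ` ?A"
    then obtain zs where zs: "zs \<in> ?A" and xs: "xs = Suc k # map h zs" by blast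
    then have "set zs \<subseteq> {1..n}" by (simp add: zigzag_perms_def)
    then show "xs \<in> ?B" using Cons_iff zs xs by simp
  next
    fix xs assume xs: "xs \<in> ?B"
    then obtain ys where ys: "xs = Suc k # ys"
      by (cases xs) (auto simp: zigzag_perms_def)
    have ys_range: "set ys \<subseteq> h ` {1..n}"
      using xs bij by (auto simp: ys zigzag_perms_def bij_betw_def)
    define zs where "zs = map (inv_into {1..n} h) ys"
    have xs_eq: "xs = Suc k # map h zs"
      using ys_range by (simp add: ys zs_def map_idI f_inv_into_f subset_iff)
    have "set zs \<subseteq> {1..n}"
      using ys_range by (auto simp: zs_def intro: inv_into_into)
    then have "zs \<in> ?A" using Cons_iff xs xs_eq by simp
    then show "xs \<in> (\<lambda>zs. Suc k # map h zs) ` ?A" using xs_eq by blast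
  qed
  then show ?thesis
    by (simp add: entringer_eq_card bij_betw_same_card)
qed

lemma hd_zigzag_perms: "xs \<in> zigzag_perms n \<Longrightarrow> xs \<noteq> [] \<Longrightarrow> hd xs \<in> {1..n}"
  unfolding zigzag_perms_def using hd_in_set by blast

lemma entringer_diag: "entringer n n = euler_zigzag n"
proof -
  have "{zs \<in> zigzag_perms n. zs \<noteq> [] \<longrightarrow> n < hd zs + n} = zigzag_perms n"
    using hd_zigzag_perms by fastforce
  then show ?thesis by (simp add: entringer_eq_card_hd_gt euler_zigzag_eq_card)
qed

lemma entringer_Suc_0: "entringer (Suc n) 0 = 0"
proof -
  have "entringer (Suc n) 0 = card {zs \<in> zigzag_perms (Suc n). zs \<noteq> [] \<longrightarrow> Suc n < hd zs}"
    by (simp add: entringer_eq_card_hd_gt)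
  also have "{zs \<in> zigzag_perms (Suc n). zs \<noteq> [] \<longrightarrow> Suc n < hd zs} = {}"
    using hd_zigzag_perms length_zigzag_perms by fastforce
  finally show ?thesis by simp
qed

lemma entringer_Suc_Suc:
  assumes "k \<le> n"
  shows "entringer (Suc n) (Suc k) = entringer (Suc n) k + entringer n (n - k)"
proof -
  let ?Z = "zigzag_perms (Suc n)"
  let ?S = "\<lambda>k. {zs \<in> ?Z. zs \<noteq> [] \<longrightarrow> Suc n < hd zs + k}"
  let ?T = "{zs \<in> ?Z. hd zs = Suc (n - k)}"
  have "entringer (Suc n) (Suc k) = card (?S (Suc k))"
    using assms by (simp add: entringer_eq_card_hd_gt)
  also have "?S (Suc k) = ?S k \<union> ?T"
    using assms length_zigzag_perms by fastforce
  also have "card (?S k \<union> ?T) = card (?S k) + card ?T"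
    using assms
    by (intro card_Un_disjoint) (auto simp: finite_zigzag_perms dest: length_zigzag_perms)
  also have "\<dots> = entringer (Suc n) k + entringer n (n - k)"
    using assms by (simp add: entringer_eq_card_hd_gt[of k "Suc n"] entringer_eq_card[of n])
  finally show ?thesis .
qed

lemma entringer_0_0: "entringer 0 0 = 1"
proof -
  have "zigzag_perms 0 = {[]}" by (auto simp: zigzag_perms_def down_up_def)
  then show ?thesis by (simp add: entringer_diag euler_zigzag_eq_card)
qed

lemma gamma_node_induct [consumes 1, case_names origin border step]:
  assumes "b \<le> a"
    and "P 0 0"
    and "\<And>n. P (Suc n) 0"
    and "\<And>n k. k \<le> n \<Longrightarrow> P (Suc n) k \<Longrightarrow> P n (n - k) \<Longrightarrow> P (Suc n) (Suc k)"
  shows "P a b"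
  using assms(1)
proof (induction a arbitrary: b)
  case 0
  then show ?case using assms(2) by simp
next
  case (Suc n)
  note previous_row_IH = Suc.IH
  from \<open>b \<le> Suc n\<close> show ?case
  proof (induction b)
    case 0
    show ?case by (rule assms(3))
  next
    case (Suc k)
    then have "k \<le> n" by simp
    moreover have "P (Suc n) k" using Suc by simp
    moreover have "P n (n - k)" by (rule previous_row_IH) simp
    ultimately show ?case by (rule assms(4))
  qed
qed

lemma gamma_edge_target_node: "gamma_edge u v \<Longrightarrow> gamma_node v"
  unfolding gamma_edge_def gamma_node_def by auto

lemma gamma_edge_into_Suc_Suc:
  "gamma_edge w (Suc n, Suc k) \<longleftrightarrow> k \<le> n \<and> (w = (Suc n, k) \<or> w = (n, n - k))"
  unfolding gamma_edge_def by auto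

lemma no_gamma_edge_into_border: "\<not> gamma_edge w (a, 0)"
  unfolding gamma_edge_def by auto

lemma gamma_path_iff_successively:
  "gamma_path ps \<longleftrightarrow> ps \<noteq> [] \<and> (\<forall>v\<in>set ps. gamma_node v) \<and> successively gamma_edge ps"
  unfolding gamma_path_def successively_conv_nth ..

lemma gamma_path_snoc:
  "qs \<noteq> [] \<Longrightarrow> gamma_path (qs @ [v]) \<longleftrightarrow> gamma_path qs \<and> gamma_edge (last qs) v"
  by (auto simp: gamma_path_iff_successively successively_append_iff gamma_edge_target_node)

definition gamma_paths :: "nat \<times> nat \<Rightarrow> nat \<times> nat \<Rightarrow> (nat \<times> nat) list set" where
  "gamma_paths u v = {ps. gamma_path ps \<and> hd ps = u \<and> last ps = v}"

lemma gamma_paths_last_step: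
  "gamma_paths u v = (if u = v \<and> gamma_node v then {[v]} else {}) \<union>
     (\<lambda>qs. qs @ [v]) ` (\<Union>w\<in>{w. gamma_edge w v}. gamma_paths u w)"
proof (intro equalityI subsetI)
  fix ps assume ps: "ps \<in> gamma_paths u v"
  then have "ps \<noteq> []" by (simp add: gamma_paths_def gamma_path_def)
  moreover have "last ps = v" using ps by (simp add: gamma_paths_def)
  ultimately obtain qs where qs: "ps = qs @ [v]"
    by (metis append_butlast_last_id)
  show "ps \<in> (if u = v \<and> gamma_node v then {[v]} else {}) \<union>
     (\<lambda>qs. qs @ [v]) ` (\<Union>w\<in>{w. gamma_edge w v}. gamma_paths u w)"
  proof (cases "qs = []")
    case True
    then show ?thesis using ps qs by (auto simp: gamma_paths_def gamma_path_def)
  next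
    case False
    have "gamma_path qs" "gamma_edge (last qs) v"
      using ps gamma_path_snoc[OF False] by (simp_all add: qs gamma_paths_def)
    moreover have "hd qs = u" using ps False by (simp add: qs gamma_paths_def)
    ultimately show ?thesis unfolding qs gamma_paths_def by blast
  qed
next
  fix ps assume "ps \<in> (if u = v \<and> gamma_node v then {[v]} else {}) \<union>
     (\<lambda>qs. qs @ [v]) ` (\<Union>w\<in>{w. gamma_edge w v}. gamma_paths u w)"
  then show "ps \<in> gamma_paths u v"
  proof (elim UnE imageE UN_E)
    fix qs w assume ps: "ps = qs @ [v]" and "w \<in> {w. gamma_edge w v}" "qs \<in> gamma_paths u w"
    moreover from this have "qs \<noteq> []" by (simp add: gamma_paths_def gamma_path_def)
    ultimately show ?thesis by (simp add: gamma_paths_def gamma_path_snoc)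
  qed (auto split: if_splits simp: gamma_paths_def gamma_path_def)
qed

lemma gamma_paths_into_border: "gamma_paths u (a, 0) = (if u = (a, 0) then {[(a, 0)]} else {})"
  by (subst gamma_paths_last_step) (simp add: no_gamma_edge_into_border gamma_node_def)

lemma gamma_paths_into_Suc_Suc:
  assumes "k \<le> n"
  shows "gamma_paths u (Suc n, Suc k) =
    (if u = (Suc n, Suc k) then {[(Suc n, Suc k)]} else {}) \<union>
    (\<lambda>qs. qs @ [(Suc n, Suc k)]) ` (gamma_paths u (Suc n, k) \<union> gamma_paths u (n, n - k))"
proof -
  have "{w. gamma_edge w (Suc n, Suc k)} = {(Suc n, k), (n, n - k)}"
    using assms by (auto simp: gamma_edge_into_Suc_Suc)
  then show ?thesis
    by (subst gamma_paths_last_step) (simp add: gamma_node_def assms)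
qed

lemma finite_gamma_paths: "finite (gamma_paths u v)"
proof -
  obtain a b where v: "v = (a, b)" by fastforce
  show ?thesis
  proof (cases "b \<le> a")
    case True
    then show ?thesis unfolding v
    proof (induction a b rule: gamma_node_induct)
      case origin
      then show ?case by (simp add: gamma_paths_into_border)
    next
      case (border n)
      then show ?case by (simp add: gamma_paths_into_border)
    next
      case (step n k)
      then show ?case by (simp add: gamma_paths_into_Suc_Suc)
    qed
  next
    case False
    then have "gamma_paths u v = {}"
      unfolding v gamma_paths_def gamma_path_def gamma_node_def using last_in_set by fastforce
    then show ?thesis by simp
  qed
qed

lemma path_count_border: "path_count n 0 i = (if i = n then 1 else 0)"
  by (simp add: path_count_def gamma_paths_def[symmetric] gamma_paths_into_border)

lemma path_count_Suc_Suc: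
  assumes "k \<le> n"
  shows "path_count (Suc n) (Suc k) i = path_count (Suc n) k i + path_count n (n - k) i"
proof -
  let ?P = "\<lambda>v. gamma_paths (i, 0) v"
  have "?P (Suc n, Suc k) = (\<lambda>qs. qs @ [(Suc n, Suc k)]) ` (?P (Suc n, k) \<union> ?P (n, n - k))"
    using gamma_paths_into_Suc_Suc[OF assms] by simp
  then have "card (?P (Suc n, Suc k)) = card (?P (Suc n, k) \<union> ?P (n, n - k))"
    by (simp add: card_image inj_on_def)
  also have "\<dots> = card (?P (Suc n, k)) + card (?P (n, n - k))"
    by (rule card_Un_disjoint[OF finite_gamma_paths finite_gamma_paths]) (auto simp: gamma_paths_def)
  finally show ?thesis by (simp add: path_count_def gamma_paths_def)
qed

lemma path_count_eq_entringer: "k \<le> n \<Longrightarrow> path_count n k 0 = entringer n k"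
proof (induction n k rule: gamma_node_induct)
  case origin
  then show ?case by (simp add: path_count_border entringer_0_0)
next
  case (border n)
  then show ?case by (simp add: path_count_border entringer_Suc_0)
next
  case (step n k)
  then show ?case by (simp add: path_count_Suc_Suc entringer_Suc_Suc)
qed

text \<open>The range \<open>r < n\<close> does not depend on \<open>k\<close>; the extra terms vanish because
  their binomial coefficient is \<open>0\<close>.\<close>

definition entringer_sum :: "nat \<Rightarrow> nat \<Rightarrow> int" where
  "entringer_sum n k =
     (\<Sum>r<n. (-1) ^ r * int (k choose (2 * r + 1)) * int (euler_zigzag (n - 2 * r - 1)))"

lemma binomial_second_difference:
  "(Suc (Suc k) choose Suc (Suc j)) + (k choose Suc (Suc j)) =
     2 * (Suc k choose Suc (Suc j)) + (k choose j)"
  by simp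

lemma entringer_sum_second_difference:
  assumes "k \<le> m"
  shows "entringer_sum (Suc (Suc m)) (Suc (Suc k)) - 2 * entringer_sum (Suc (Suc m)) (Suc k)
           + entringer_sum (Suc (Suc m)) k = - entringer_sum m k"
proof -
  define E where "E r = int (euler_zigzag (Suc (Suc m) - 2 * r - 1))" for r
  define D where "D r = int (Suc (Suc k) choose (2 * r + 1)) - 2 * int (Suc k choose (2 * r + 1))
                        + int (k choose (2 * r + 1))" for r
  have D_0: "D 0 = 0" and D_Suc: "D (Suc s) = int (k choose (2 * s + 1))" for s
    using binomial_second_difference[of k "2 * s + 1"] by (simp_all add: D_def)
  have "entringer_sum (Suc (Suc m)) (Suc (Suc k)) - 2 * entringer_sum (Suc (Suc m)) (Suc k)
           + entringer_sum (Suc (Suc m)) k = (\<Sum>r<Suc (Suc m). (-1) ^ r * D r * E r)"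
    unfolding entringer_sum_def D_def E_def
    by (simp add: sum_subtractf sum.distrib sum_distrib_left algebra_simps)
  also have "\<dots> = (\<Sum>s<Suc m. (-1) ^ Suc s * int (k choose (2 * s + 1)) * E (Suc s))"
    by (simp add: sum.lessThan_Suc_shift D_0 D_Suc del: sum.lessThan_Suc)
  also have "\<dots> = (\<Sum>s<m. (-1) ^ Suc s * int (k choose (2 * s + 1)) * E (Suc s))"
    using assms by simp
  also have "\<dots> = - entringer_sum m k"
    unfolding entringer_sum_def E_def by (simp add: sum_negf[symmetric])
  finally show ?thesis .
qed

lemma entringer_second_difference:
  assumes "k \<le> m"
  shows "int (entringer (Suc (Suc m)) (Suc (Suc k))) - 2 * int (entringer (Suc (Suc m)) (Suc k))
           + int (entringer (Suc (Suc m)) k) = - int (entringer m k)"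
proof -
  have "entringer (Suc (Suc m)) (Suc (Suc k)) =
      entringer (Suc (Suc m)) (Suc k) + entringer (Suc m) (m - k)"
    using assms by (simp add: entringer_Suc_Suc)
  moreover have "entringer (Suc (Suc m)) (Suc k) =
      entringer (Suc (Suc m)) k + entringer (Suc m) (Suc (m - k))"
    using assms entringer_Suc_Suc[of k "Suc m"] by (simp add: Suc_diff_le)
  moreover have "entringer (Suc m) (Suc (m - k)) = entringer (Suc m) (m - k) + entringer m k"
    using assms entringer_Suc_Suc[of "m - k" m] by simp
  ultimately show ?thesis by simp
qed

lemma entringer_eq_entringer_sum:
  "k \<le> n \<Longrightarrow> int (entringer (Suc n) k) = entringer_sum (Suc n) k"
proof (induction k arbitrary: n rule: induct_nat_012)
  case 0
  then show ?case by (simp add: entringer_Suc_0 entringer_sum_def)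
next
  case 1
  have "entringer (Suc n) 1 = euler_zigzag n"
    using entringer_Suc_Suc[of 0 n] by (simp add: entringer_Suc_0 entringer_diag)
  moreover have "entringer_sum (Suc n) 1 = int (euler_zigzag n)"
    unfolding entringer_sum_def by (subst sum.lessThan_Suc_shift) simp
  ultimately show ?case by simp
next
  case (ge2 k)
  then obtain m where n: "n = Suc m" and "k < m" by (cases n) auto
  then obtain m' where m: "m = Suc m'" and "k \<le> m'" by (cases m) auto
  have "int (entringer (Suc n) (Suc (Suc k))) = 2 * int (entringer (Suc n) (Suc k))
          - int (entringer (Suc n) k) - int (entringer m k)"
    using entringer_second_difference[of k m] \<open>k < m\<close> n by simp
  also have "\<dots> = 2 * entringer_sum (Suc n) (Suc k) - entringer_sum (Suc n) k - entringer_sum m k"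
    using ge2 \<open>k \<le> m'\<close> m by simp
  also have "\<dots> = entringer_sum (Suc n) (Suc (Suc k))"
    using entringer_sum_second_difference[of k m] \<open>k < m\<close> n by simp
  finally show ?case .
qed

lemma entringer_sum_eq_sum_odd:
  assumes "k < n"
  shows "entringer_sum n k =
    (\<Sum>r\<in>{r. 2 * r + 1 \<le> k}.
       (-1) ^ r * int (k choose (2 * r + 1)) * int (euler_zigzag (n - 2 * r - 1)))"
  unfolding entringer_sum_def using assms by (intro sum.mono_neutral_right) auto

theorem proposition3:
  fixes n k :: nat
  assumes "1 \<le> n" and "k \<le> n - 1"
  shows "path_count n k 0 = entringer n k \<and>
         int (entringer n k) =
           (\<Sum>r\<in>{r::nat. 2 * r + 1 \<le> k}.
              (-1) ^ r * int (k choose (2 * r + 1)) * int (euler_zigzag (n - 2 * r - 1)))"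
proof -
  obtain m where n: "n = Suc m" using assms(1) by (cases n) auto
  have "path_count n k 0 = entringer n k"
    using assms by (intro path_count_eq_entringer) simp
  moreover have "int (entringer n k) = entringer_sum n k"
    using assms n entringer_eq_entringer_sum[of k m] by simp
  moreover have "k < n" using assms by simp
  ultimately show ?thesis by (simp add: entringer_sum_eq_sum_odd)
qed

end
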